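(* Let $\Lambda$ be a finite-dimensional algebra over a field $k$. Then: (1) $K({\bf T}(\Lambda))=K(\Lambda) \ltimes [\Lambda,\Lambda^*]$, i.e. $K({\bf T}(\Lambda))=\{(a,\varphi): a\in K(\Lambda),\ \varphi\in[\Lambda,\Lambda^*]\}$. (2) Assume moreover that $\Lambda$ is symmetric with symmetrizing (associative, symmetric, nondegenerate bilinear) form $\langle-,-\rangle$. Then (a) $[\Lambda,\Lambda^*]$ is spanned by the linear maps $\varphi_{[a,b]}:=\langle -,ab-ba\rangle$, $a,b\in\Lambda$; (b) $[\Lambda,\Lambda^*] = \operatorname{Ann}_{\Lambda^*}(Z(\Lambda))$.
   Context: $\Lambda^*=\operatorname{Hom}_k(\Lambda,k)$ is a $\Lambda$-$\Lambda$-bimodule via $(a\varphi)(b)=\varphi(ba)$, $(\varphi a)(b)=\varphi(ab)$. The trivial extension ${\bf T}(\Lambda)$ is $\Lambda\oplus\Lambda^*$ with multiplication $(a,\varphi)(b,\psi)=(ab,a\psi+\varphi b)$. For an algebra $A$, $K(A)$ is the $k$-span of all commutators $xy-yx$. $[\Lambda,\Lambda^*]$ is the $k$-span of all $a\varphi-\varphi a$ with $a\in\Lambda$, $\varphi\in\Lambda^*$. $Z(\Lambda)$ is the center, and $\operatorname{Ann}_{\Lambda^*}(V)=\{\varphi\in\Lambda^*:\varphi(V)=0\}$ for $V\subseteq\Lambda$. *)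

theory Defs
  imports Complex_Main "HOL-Library.Function_Algebras" "HOL-Library.Product_Plus"
begin

definition fd_algebra :: "('k::field \<Rightarrow> 'a::ring_1 \<Rightarrow> 'a) \<Rightarrow> bool" where
  "fd_algebra scale \<longleftrightarrow> vector_space scale
     \<and> (\<forall>c x y. scale c (x * y) = scale c x * y \<and> scale c (x * y) = x * scale c y)
     \<and> (\<exists>B. finite B \<and> module.span scale B = UNIV)"

definition dual :: "('k::field \<Rightarrow> 'a::ring_1 \<Rightarrow> 'a) \<Rightarrow> ('a \<Rightarrow> 'k) set" where
  "dual scale = {\<phi>. Vector_Spaces.linear scale (*) \<phi>}"

definition dscale :: "'k::field \<Rightarrow> ('a \<Rightarrow> 'k) \<Rightarrow> ('a \<Rightarrow> 'k)" where
  "dscale c \<phi> = (\<lambda>x. c * \<phi> x)"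

definition lact :: "'a::ring_1 \<Rightarrow> ('a \<Rightarrow> 'k) \<Rightarrow> ('a \<Rightarrow> 'k)" where
  "lact a \<phi> = (\<lambda>b. \<phi> (b * a))"

definition ract :: "('a \<Rightarrow> 'k) \<Rightarrow> 'a::ring_1 \<Rightarrow> ('a \<Rightarrow> 'k)" where
  "ract \<phi> a = (\<lambda>b. \<phi> (a * b))"

definition triv_ext :: "('k::field \<Rightarrow> 'a::ring_1 \<Rightarrow> 'a) \<Rightarrow> ('a \<times> ('a \<Rightarrow> 'k)) set" where
  "triv_ext scale = {(a, \<phi>). \<phi> \<in> dual scale}"

definition tscale :: "('k::field \<Rightarrow> 'a \<Rightarrow> 'a) \<Rightarrow> 'k \<Rightarrow> 'a \<times> ('a \<Rightarrow> 'k) \<Rightarrow> 'a \<times> ('a \<Rightarrow> 'k)" where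
  "tscale scale c p = (scale c (fst p), dscale c (snd p))"

definition tmult :: "'a::ring_1 \<times> ('a \<Rightarrow> 'k::field) \<Rightarrow> 'a \<times> ('a \<Rightarrow> 'k) \<Rightarrow> 'a \<times> ('a \<Rightarrow> 'k)" where
  "tmult p q = (fst p * fst q, lact (fst p) (snd q) + ract (snd p) (fst q))"

definition Kcomm :: "('k::field \<Rightarrow> 'a::ring_1 \<Rightarrow> 'a) \<Rightarrow> 'a set" where
  "Kcomm scale = module.span scale {x * y - y * x | x y. True}"

definition Kcomm_triv :: "('k::field \<Rightarrow> 'a::ring_1 \<Rightarrow> 'a) \<Rightarrow> ('a \<times> ('a \<Rightarrow> 'k)) set" where
  "Kcomm_triv scale = module.span (tscale scale)
     {tmult x y - tmult y x | x y. x \<in> triv_ext scale \<and> y \<in> triv_ext scale}"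

definition comm_dual :: "('k::field \<Rightarrow> 'a::ring_1 \<Rightarrow> 'a) \<Rightarrow> ('a \<Rightarrow> 'k) set" where
  "comm_dual scale = module.span dscale
     {lact a \<phi> - ract \<phi> a | a \<phi>. \<phi> \<in> dual scale}"

definition center :: "'a::ring_1 set" where
  "center = {z. \<forall>x. z * x = x * z}"

definition Ann_dual :: "('k::field \<Rightarrow> 'a::ring_1 \<Rightarrow> 'a) \<Rightarrow> 'a set \<Rightarrow> ('a \<Rightarrow> 'k) set" where
  "Ann_dual scale V = {\<phi> \<in> dual scale. \<forall>v\<in>V. \<phi> v = 0}"

definition symmetrizing_form :: "('k::field \<Rightarrow> 'a::ring_1 \<Rightarrow> 'a) \<Rightarrow> ('a \<Rightarrow> 'a \<Rightarrow> 'k) \<Rightarrow> bool" where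
  "symmetrizing_form scale B \<longleftrightarrow>
     (\<forall>a. Vector_Spaces.linear scale (*) (\<lambda>x. B x a))
   \<and> (\<forall>a. Vector_Spaces.linear scale (*) (\<lambda>x. B a x))
   \<and> (\<forall>a b c. B (a * b) c = B a (b * c))
   \<and> (\<forall>a b. B a b = B b a)
   \<and> (\<forall>a. (\<forall>b. B a b = 0) \<longrightarrow> a = 0)"

end

(* The commutator of (a, \<phi>) and (b, \<psi>) in T(\<Lambda>) is ([a,b], [a,\<psi>] - [b,\<phi>]), so K(T(\<Lambda>))
   lies in K(\<Lambda>) \<times> [\<Lambda>,\<Lambda>*]; the commutators of (a,0) with (b,0) and with (0,\<psi>) already
   span this product.
   For a symmetrizing form, <x, [a,b]> = <[x,a], b>, so \<phi>_[a,b] = [a, <-,b>] lies in [\<Lambda>,\<Lambda>*],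
   and every [a,\<psi>] kills the centre. Conversely, by nondegeneracy the common kernel of the
   finitely many \<phi>_[a,b] with a, b in a spanning set is exactly Z(\<Lambda>), and a functional
   vanishing on the common kernel of finitely many functionals is a combination of them. *)
theory Submission
  imports Defs "HOL-Analysis.Product_Vector"
begin

lemma vector_space_field_mult: "vector_space ((*) :: 'k::field \<Rightarrow> 'k \<Rightarrow> 'k)"
  by unfold_locales (auto simp: algebra_simps)

global_interpretation fun_space: vector_space "dscale :: 'k::field \<Rightarrow> ('a \<Rightarrow> 'k) \<Rightarrow> 'a \<Rightarrow> 'k"
  by unfold_locales (auto simp: dscale_def fun_eq_iff algebra_simps)

lemma vector_space_pair_functionals:
  fixes scale :: "'k::field \<Rightarrow> 'a::ab_group_add \<Rightarrow> 'a"
  shows "vector_space scale \<Longrightarrow> vector_space_pair scale ((*) :: 'k \<Rightarrow> 'k \<Rightarrow> 'k)"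
  by (intro vector_space_pair.intro vector_space_field_mult)

lemma subspace_dual:
  fixes scale :: "'k::field \<Rightarrow> 'a::ring_1 \<Rightarrow> 'a"
  assumes "vector_space scale"
  shows "fun_space.subspace (dual scale)"
proof -
  interpret vector_space_pair scale "(*) :: 'k \<Rightarrow> 'k \<Rightarrow> 'k"
    using assms by (rule vector_space_pair_functionals)
  show ?thesis
    unfolding fun_space.subspace_def dual_def dscale_def
    by (auto intro: module_hom_zero module_hom_add module_hom_scale simp: plus_fun_def zero_fun_def)
qed

lemma subspace_Ann_dual:
  fixes scale :: "'k::field \<Rightarrow> 'a::ring_1 \<Rightarrow> 'a"
  assumes "vector_space scale"
  shows "fun_space.subspace (Ann_dual scale V)"
proof -
  have "Ann_dual scale V = dual scale \<inter> {\<phi>. \<forall>v\<in>V. \<phi> v = 0}"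
    by (auto simp: Ann_dual_def)
  moreover have "fun_space.subspace {\<phi> :: 'a \<Rightarrow> 'k. \<forall>v\<in>V. \<phi> v = 0}"
    by (auto simp: fun_space.subspace_def dscale_def)
  ultimately show ?thesis
    using fun_space.subspace_inter subspace_dual[OF assms] by auto
qed

lemma in_span_if_common_kernel_subset:
  fixes scale :: "'k::field \<Rightarrow> 'a::ab_group_add \<Rightarrow> 'a"
  assumes "finite F" "\<forall>f\<in>F. Vector_Spaces.linear scale (*) f" "Vector_Spaces.linear scale (*) \<psi>"
    and "\<forall>x. (\<forall>f\<in>F. f x = 0) \<longrightarrow> \<psi> x = 0"
  shows "\<psi> \<in> fun_space.span F"
  using assms
proof (induction F arbitrary: \<psi> rule: finite_induct)
  case empty
  then have "\<psi> = 0" by (auto simp: fun_eq_iff)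
  then show ?case by (simp add: zero_fun_def)
next
  case (insert g F)
  interpret vector_space_pair scale "(*) :: 'k \<Rightarrow> 'k \<Rightarrow> 'k"
    using insert.prems(2) by (intro vector_space_pair_functionals) (simp add: Vector_Spaces.linear_iff)
  have lin_g: "Vector_Spaces.linear scale (*) g" and lin_F: "\<forall>f\<in>F. Vector_Spaces.linear scale (*) f"
    using insert.prems(1) by auto
  show ?case
  proof (cases "\<forall>x. (\<forall>f\<in>F. f x = 0) \<longrightarrow> g x = 0")
    case True
    then have "\<psi> \<in> fun_space.span F"
      using insert.IH lin_F insert.prems by auto
    then show ?thesis using fun_space.span_mono[of F "insert g F"] by auto
  next
    case False
    then obtain v where v_ker: "\<forall>f\<in>F. f v = 0" and gv: "g v \<noteq> 0" by auto
    define c where "c = \<psi> v / g v"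
    have "(\<lambda>x. \<psi> x - c * g x) \<in> fun_space.span F"
    proof (rule insert.IH)
      show "Vector_Spaces.linear scale (*) (\<lambda>x. \<psi> x - c * g x)"
        using insert.prems(2) lin_g by (intro module_hom_sub module_hom_scale)
      show "\<forall>x. (\<forall>f\<in>F. f x = 0) \<longrightarrow> \<psi> x - c * g x = 0"
      proof (intro allI impI)
        fix x assume x_ker: "\<forall>f\<in>F. f x = 0"
        \<comment> \<open>subtracting a multiple of v moves x into the kernel of g as well\<close>
        define y where "y = x - scale (g x / g v) v"
        have "\<forall>f\<in>insert g F. f y = 0"
          using x_ker v_ker gv lin_F lin_g by (auto simp: y_def linear_diff linear_scale)
        then have "\<psi> y = 0" using insert.prems(3) by blast
        then show "\<psi> x - c * g x = 0"
          using insert.prems(2) gv by (simp add: y_def c_def linear_diff linear_scale field_simps)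
      qed
    qed (use lin_F in auto)
    moreover have "g \<in> fun_space.span (insert g F)"
      by (simp add: fun_space.span_base)
    ultimately have "(\<lambda>x. \<psi> x - c * g x) + dscale c g \<in> fun_space.span (insert g F)"
      using fun_space.span_mono[of F "insert g F"]
      by (blast intro: fun_space.span_add fun_space.span_scale)
    moreover have "(\<lambda>x. \<psi> x - c * g x) + dscale c g = \<psi>"
      by (simp add: fun_eq_iff dscale_def)
    ultimately show ?thesis by simp
  qed
qed

lemma lact_zero [simp]: "lact a 0 = 0"
  and ract_zero [simp]: "ract 0 a = 0"
  by (simp_all add: lact_def ract_def zero_fun_def)

lemma tmult_commutator:
  "tmult (a, \<phi>) (b, \<psi>) - tmult (b, \<psi>) (a, \<phi>)
     = (a * b - b * a, (lact a \<psi> - ract \<psi> a) - (lact b \<phi> - ract \<phi> b))"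
  by (simp add: tmult_def algebra_simps)

lemma Kcomm_triv_eq:
  fixes scale :: "'k::field \<Rightarrow> 'a::ring_1 \<Rightarrow> 'a"
  assumes "vector_space scale"
  shows "Kcomm_triv scale = {(a, \<phi>). a \<in> Kcomm scale \<and> \<phi> \<in> comm_dual scale}"
proof -
  interpret vector_space_prod scale "dscale :: 'k \<Rightarrow> ('a \<Rightarrow> 'k) \<Rightarrow> 'a \<Rightarrow> 'k"
    by (intro vector_space_prod.intro vector_space_pair.intro assms fun_space.vector_space_axioms)
  define A where "A = {x * y - y * x | x y :: 'a. True}"
  define C where "C = {lact a \<phi> - ract \<phi> a | a \<phi>. \<phi> \<in> dual scale}"
  define G where "G = {tmult x y - tmult y x | x y. x \<in> triv_ext scale \<and> y \<in> triv_ext scale}"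
  have "tscale scale = module_prod.scale scale dscale"
    by (simp add: fun_eq_iff tscale_def scale_def)
  then have Kcomm_triv: "Kcomm_triv scale = p.span G"
    by (simp add: Kcomm_triv_def G_def)
  have product: "{(a, \<phi>). a \<in> Kcomm scale \<and> \<phi> \<in> comm_dual scale}
      = module.span scale A \<times> fun_space.span C"
    by (auto simp: Kcomm_def comm_dual_def A_def C_def)
  have "lact a \<psi> - ract \<psi> a \<in> fun_space.span C" if "\<psi> \<in> dual scale" for a \<psi>
    using that by (auto simp: C_def intro: fun_space.span_base)
  then have "G \<subseteq> module.span scale A \<times> fun_space.span C"
    by (auto simp: G_def triv_ext_def tmult_commutator A_def
        intro!: vs1.span_base intro: fun_space.span_diff)
  then have "p.span G \<subseteq> module.span scale A \<times> fun_space.span C"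
    by (intro p.span_minimal subspace_Times vs1.subspace_span fun_space.subspace_span)
  moreover have "0 \<in> dual scale"
    using subspace_dual[OF assms] by (rule fun_space.subspace_0)
  then have "(x * y - y * x, 0) \<in> G" and "\<psi> \<in> dual scale \<Longrightarrow> (0, lact x \<psi> - ract \<psi> x) \<in> G"
    for x y :: 'a and \<psi>
    unfolding G_def triv_ext_def
    using tmult_commutator[of x 0 y 0, symmetric] tmult_commutator[of x 0 0 \<psi>, symmetric]
    by force+
  then have "A \<times> {0} \<union> {0} \<times> C \<subseteq> G"
    by (auto simp: A_def C_def)
  then have "p.span (A \<times> {0} \<union> {0} \<times> C) \<subseteq> p.span G"
    by (rule p.span_mono)
  then have "module.span scale A \<times> fun_space.span C \<subseteq> p.span G"
    by (auto simp: p.span_Un span_Times_sing1 span_Times_sing2)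
  ultimately show ?thesis
    using Kcomm_triv product by auto
qed

locale algebra_over_field = vector_space scale
  for scale :: "'k::field \<Rightarrow> 'a::ring_1 \<Rightarrow> 'a" +
  assumes scale_mult_left: "scale c x * y = scale c (x * y)"
    and mult_scale_right: "x * scale c y = scale c (x * y)"
begin

sublocale functionals: vector_space_pair scale "(*) :: 'k \<Rightarrow> 'k \<Rightarrow> 'k"
  by (rule vector_space_pair_functionals[OF vector_space_axioms])

lemma linear_mult_left: "Vector_Spaces.linear scale scale (\<lambda>x. a * x)"
  using vector_space_axioms by (simp add: Vector_Spaces.linear_iff distrib_left mult_scale_right)

lemma linear_mult_right: "Vector_Spaces.linear scale scale (\<lambda>x. x * a)"
  using vector_space_axioms by (simp add: Vector_Spaces.linear_iff distrib_right scale_mult_left)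

lemma lact_in_dual: "\<psi> \<in> dual scale \<Longrightarrow> lact a \<psi> \<in> dual scale"
  using Vector_Spaces.linear_compose[OF linear_mult_right]
  by (simp add: dual_def lact_def comp_def)

lemma ract_in_dual: "\<psi> \<in> dual scale \<Longrightarrow> ract \<psi> a \<in> dual scale"
  using Vector_Spaces.linear_compose[OF linear_mult_left]
  by (simp add: dual_def ract_def comp_def)

lemma comm_dual_subset_Ann_dual_center: "comm_dual scale \<subseteq> Ann_dual scale center"
  unfolding comm_dual_def
proof (rule fun_space.span_minimal)
  show "{lact a \<psi> - ract \<psi> a |a \<psi>. \<psi> \<in> dual scale} \<subseteq> Ann_dual scale center"
  proof clarify
    fix a \<psi> assume "\<psi> \<in> dual scale"
    then have "lact a \<psi> - ract \<psi> a \<in> dual scale"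
      by (intro fun_space.subspace_diff[OF subspace_dual] vector_space_axioms lact_in_dual ract_in_dual)
    then show "lact a \<psi> - ract \<psi> a \<in> Ann_dual scale center"
      by (simp add: Ann_dual_def center_def lact_def ract_def)
  qed
qed (rule subspace_Ann_dual[OF vector_space_axioms])

lemma subspace_centralizer: "subspace {y. x * y = y * x}"
  by (simp add: subspace_def distrib_left distrib_right scale_mult_left mult_scale_right)

lemma center_if_commutes_with_spanning_set:
  assumes "span Bs = UNIV" and "\<forall>b\<in>Bs. x * b = b * x"
  shows "x \<in> center"
proof -
  have "span Bs \<subseteq> {y. x * y = y * x}"
    using assms(2) by (intro span_minimal subspace_centralizer) auto
  then show ?thesis using assms(1) by (auto simp: center_def)
qed

end

locale symmetric_algebra = algebra_over_field scale
  for scale :: "'k::field \<Rightarrow> 'a::ring_1 \<Rightarrow> 'a" +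
  fixes form :: "'a \<Rightarrow> 'a \<Rightarrow> 'k"
  assumes symmetrizing_form: "symmetrizing_form scale form"
begin

lemma linear_form_left: "Vector_Spaces.linear scale (*) (\<lambda>x. form x b)"
  and linear_form_right: "Vector_Spaces.linear scale (*) (\<lambda>y. form a y)"
  and form_assoc: "form (a * b) c = form a (b * c)"
  and form_commute: "form a b = form b a"
  and form_nondegenerate: "(\<And>b. form a b = 0) \<Longrightarrow> a = 0"
  using symmetrizing_form unfolding symmetrizing_form_def by blast+

lemma form_commutator: "form x (a * b - b * a) = form (x * a - a * x) b"
proof -
  have "form x (b * a) = form (a * x) b"
    by (metis form_assoc form_commute)
  then show ?thesis
    by (simp add: functionals.linear_diff[OF linear_form_left]
        functionals.linear_diff[OF linear_form_right] form_assoc)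
qed

lemma form_commutator_eq_commutator_functional:
  "(\<lambda>x. form x (a * b - b * a)) = lact a (\<lambda>x. form x b) - ract (\<lambda>x. form x b) a"
  by (simp add: fun_eq_iff form_commutator lact_def ract_def
      functionals.linear_diff[OF linear_form_left])

lemma center_if_form_commutators_vanish:
  assumes span: "span Bs = UNIV" and vanish: "\<forall>a\<in>Bs. \<forall>b\<in>Bs. form x (a * b - b * a) = 0"
  shows "x \<in> center"
proof -
  have "x * a - a * x = 0" if "a \<in> Bs" for a
  proof (rule form_nondegenerate)
    fix b
    show "form (x * a - a * x) b = 0"
    proof (rule functionals.linear_eq_0_on_span[OF linear_form_right])
      show "form (x * a - a * x) c = 0" if "c \<in> Bs" for c
        using \<open>a \<in> Bs\<close> that vanish by (simp add: form_commutator[symmetric])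
      show "b \<in> span Bs" using span by simp
    qed
  qed
  then show ?thesis
    using center_if_commutes_with_spanning_set[OF span] by simp
qed

lemma Ann_dual_center_subset_span_form_commutators:
  assumes "finite Bs" and "span Bs = UNIV"
  shows "Ann_dual scale center
    \<subseteq> fun_space.span ((\<lambda>(a, b) x. form x (a * b - b * a)) ` (Bs \<times> Bs))"
proof
  fix \<phi> assume "\<phi> \<in> Ann_dual scale center"
  then show "\<phi> \<in> fun_space.span ((\<lambda>(a, b) x. form x (a * b - b * a)) ` (Bs \<times> Bs))"
    using assms center_if_form_commutators_vanish[OF assms(2)] linear_form_left
    by (intro in_span_if_common_kernel_subset) (auto simp: Ann_dual_def dual_def)
qed

lemma span_form_commutators_subset_comm_dual:
  "fun_space.span {(\<lambda>x. form x (a * b - b * a)) | a b. True} \<subseteq> comm_dual scale"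
  unfolding comm_dual_def
  unfolding form_commutator_eq_commutator_functional dual_def
  by (intro fun_space.span_mono) (blast intro: linear_form_left)

theorem comm_dual_eq:
  assumes "finite Bs" and "span Bs = UNIV"
  shows comm_dual_eq_span_form_commutators:
      "comm_dual scale = fun_space.span {(\<lambda>x. form x (a * b - b * a)) | a b. True}"
    and comm_dual_eq_Ann_dual_center: "comm_dual scale = Ann_dual scale center"
proof -
  have "fun_space.span ((\<lambda>(a, b) x. form x (a * b - b * a)) ` (Bs \<times> Bs))
      \<subseteq> fun_space.span {(\<lambda>x. form x (a * b - b * a)) | a b. True}"
    by (intro fun_space.span_mono) auto
  with Ann_dual_center_subset_span_form_commutators[OF assms]
    span_form_commutators_subset_comm_dual comm_dual_subset_Ann_dual_center
  show "comm_dual scale = fun_space.span {(\<lambda>x. form x (a * b - b * a)) | a b. True}"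
    and "comm_dual scale = Ann_dual scale center"
    by auto
qed

end

theorem lemma3p4:
  fixes scale :: "'k::field \<Rightarrow> 'a::ring_1 \<Rightarrow> 'a"
  assumes "fd_algebra scale"
  shows "Kcomm_triv scale = {(a, \<phi>). a \<in> Kcomm scale \<and> \<phi> \<in> comm_dual scale}
       \<and> (\<forall>B. symmetrizing_form scale B \<longrightarrow>
           comm_dual scale = module.span dscale {(\<lambda>x. B x (a * b - b * a)) | a b. True}
         \<and> comm_dual scale = Ann_dual scale center)"
proof -
  from assms obtain Bs where alg: "algebra_over_field scale"
    and Bs: "finite Bs" "module.span scale Bs = UNIV"
    unfolding fd_algebra_def algebra_over_field_def algebra_over_field_axioms_def by metis
  interpret algebra_over_field scale by (fact alg)
  have "comm_dual scale = module.span dscale {(\<lambda>x. B x (a * b - b * a)) | a b. True}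
      \<and> comm_dual scale = Ann_dual scale center" if "symmetrizing_form scale B" for B
  proof -
    interpret symmetric_algebra scale B
      by (intro symmetric_algebra.intro symmetric_algebra_axioms.intro alg that)
    show ?thesis using comm_dual_eq[OF Bs] by simp
  qed
  then show ?thesis using Kcomm_triv_eq[OF vector_space_axioms] by blast
qed

end
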